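(* Let $\beta\in B_n$ with $\kappa(\beta)<\infty$. Then the length of the spectral sequence from the annular Khovanov homology of $\bar\beta$ to the Khovanov homology of $\bar\beta$ (i.e. the least $r$ such that $E^r=E^\infty$) is bounded below by $\kappa(\beta)$.
   Context: Work over $\mathbb{Z}/2$ with the Khovanov chain complex $\mathrm{CKh}(\bar\beta)$ of the braid closure (cube of resolutions, circles labeled $v_\pm$, Khovanov's differential). A circle of a resolution is nontrivial if it winds an odd number of times around the braid axis. The $k$-grading of a generator is (nontrivial circles labeled $v_+$) minus (nontrivial circles labeled $v_-$); the differential does not increase $k$, and $\mathcal{F}_i=\mathrm{span}\{x:k(x)\le i\}$ is a bounded filtration whose spectral sequence has $E^1$ page the annular Khovanov homology and converges to $\mathrm{Kh}(\bar\beta)$. $\psi(\bar\beta)$ labels all $n$ circles of the braidlike resolution ($0$-resolve positive, $1$-resolve negative crossings) by $v_-$. $\kappa(\beta)=n+\min\{i:\psi(\bar\beta)=dy,\ y\in\mathcal{F}_i\}$ if $\psi(\bar\beta)$ is a boundary, and $\infty$ otherwise. *)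

theory Defs
  imports Main "HOL-Library.FuncSet"
begin

text \<open>A braid word in B_n is a list of letters (i, pos) with 1 <= i < n; the letter
  (i, True) is the Artin generator sigma_i (a positive crossing of the closure), the
  letter (i, False) is its inverse (a negative crossing).  Strand positions are
  0-indexed 0..n-1, so sigma_i acts on positions i-1 and i.\<close>

definition braid_word :: "nat \<Rightarrow> (nat \<times> bool) list \<Rightarrow> bool" where
  "braid_word n w \<longleftrightarrow> n \<ge> 1 \<and> (\<forall>c\<in>set w. 1 \<le> fst c \<and> fst c < n)"

text \<open>Nodes of the diagram: (j, l) is the point of position j at level l, where crossing
  number k sits between levels k and k+1, and level (length w) is glued to level 0 by
  the braid closure.\<close>

definition nodes :: "nat \<Rightarrow> nat \<Rightarrow> (nat \<times> nat) set" where
  "nodes n c = {(j, l). j < n \<and> l \<le> c}"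

text \<open>A resolution is a bool list s (False = 0-resolution, True = 1-resolution).
  With Khovanov's convention, the 0-resolution of a positive crossing and the
  1-resolution of a negative crossing are the braidlike (oriented) ones; i.e. crossing k
  is resolved braidlike iff s!k differs from its sign.\<close>

definition res_edges :: "nat \<Rightarrow> (nat \<times> bool) list \<Rightarrow> bool list \<Rightarrow> ((nat \<times> nat) \<times> (nat \<times> nat)) set" where
  "res_edges n w s =
     {((j, length w), (j, 0)) | j. j < n}
   \<union> {((j, k), (j, Suc k)) | j k. k < length w \<and> j < n \<and> j \<noteq> fst (w!k) - 1 \<and> j \<noteq> fst (w!k)}
   \<union> {((j, k), (j, Suc k)) | j k. k < length w \<and> s!k \<noteq> snd (w!k) \<and> (j = fst (w!k) - 1 \<or> j = fst (w!k))}
   \<union> {((fst (w!k) - 1, l), (fst (w!k), l)) | k l. k < length w \<and> s!k = snd (w!k) \<and> (l = k \<or> l = Suc k)}"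

definition comp_rel :: "nat \<Rightarrow> (nat \<times> bool) list \<Rightarrow> bool list \<Rightarrow> ((nat \<times> nat) \<times> (nat \<times> nat)) set" where
  "comp_rel n w s = (res_edges n w s \<union> converse (res_edges n w s))\<^sup>* \<inter> (nodes n (length w) \<times> nodes n (length w))"

definition circles :: "nat \<Rightarrow> (nat \<times> bool) list \<Rightarrow> bool list \<Rightarrow> (nat \<times> nat) set set" where
  "circles n w s = nodes n (length w) // comp_rel n w s"

text \<open>Level 0 is a meridional half-plane page bounded by the braid axis, met transversally;
  a circle winds an odd number of times around the axis iff it meets it an odd number of
  times.\<close>
definition nontrivial :: "(nat \<times> nat) set \<Rightarrow> bool" where
  "nontrivial C \<longleftrightarrow> odd (card {j. (j, 0) \<in> C})"

text \<open>A generator: a resolution together with a labelling of its circles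
  (True = v_plus, False = v_minus).\<close>
type_synonym gen = "bool list \<times> ((nat \<times> nat) set \<Rightarrow> bool)"

definition gens :: "nat \<Rightarrow> (nat \<times> bool) list \<Rightarrow> gen set" where
  "gens n w = {(s, L). length s = length w \<and> L \<in> PiE (circles n w s) (\<lambda>_. UNIV)}"

definition kgr :: "nat \<Rightarrow> (nat \<times> bool) list \<Rightarrow> gen \<Rightarrow> int" where
  "kgr n w x = int (card {C \<in> circles n w (fst x). nontrivial C \<and> snd x C})
             - int (card {C \<in> circles n w (fst x). nontrivial C \<and> \<not> snd x C})"

text \<open>Coefficient (in Z/2) of generator y in Khovanov's differential of generator x:
  edge maps are the merge m(v+ v+) = v+, m(v+ v-) = m(v- v+) = v-, m(v- v-) = 0 and the
  split D(v+) = v+ v- + v- v+, D(v-) = v- v-, identity on untouched circles.\<close>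
definition coef :: "nat \<Rightarrow> (nat \<times> bool) list \<Rightarrow> gen \<Rightarrow> gen \<Rightarrow> bool" where
  "coef n w x y \<longleftrightarrow>
     (\<exists>k < length w. fst x ! k = False \<and> fst y = (fst x)[k := True] \<and>
       (let A = circles n w (fst x) - circles n w (fst y);
            B = circles n w (fst y) - circles n w (fst x) in
        (\<forall>C \<in> circles n w (fst x) \<inter> circles n w (fst y). snd y C = snd x C) \<and>
        ((card A = 2 \<and> card B = 1 \<and>
            (\<exists>C\<in>A. snd x C) \<and> (\<forall>D\<in>B. snd y D \<longleftrightarrow> (\<forall>C\<in>A. snd x C)))
         \<or> (card A = 1 \<and> card B = 2 \<and>
            (\<forall>C\<in>A. card {D \<in> B. \<not> snd y D} = (if snd x C then 1 else 2))))))"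

text \<open>Chains are finite subsets of the generators (Z/2-linear combinations); addition is
  symmetric difference.\<close>
definition chadd :: "gen set \<Rightarrow> gen set \<Rightarrow> gen set" where
  "chadd X Y = (X - Y) \<union> (Y - X)"

definition dchain :: "nat \<Rightarrow> (nat \<times> bool) list \<Rightarrow> gen set \<Rightarrow> gen set" where
  "dchain n w X = {y \<in> gens n w. odd (card {x \<in> X. coef n w x y})}"

definition chains :: "nat \<Rightarrow> (nat \<times> bool) list \<Rightarrow> gen set set" where
  "chains n w = Pow (gens n w)"

definition filt :: "nat \<Rightarrow> (nat \<times> bool) list \<Rightarrow> int \<Rightarrow> gen set set" where
  "filt n w i = {X. X \<subseteq> gens n w \<and> (\<forall>x\<in>X. kgr n w x \<le> i)}"

definition braidlike_res :: "(nat \<times> bool) list \<Rightarrow> bool list" where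
  "braidlike_res w = map (\<lambda>c. \<not> snd c) w"

definition psi :: "nat \<Rightarrow> (nat \<times> bool) list \<Rightarrow> gen set" where
  "psi n w = {(braidlike_res w, restrict (\<lambda>_. False) (circles n w (braidlike_res w)))}"

text \<open>kappa, with None standing for infinity.\<close>
definition kappa :: "nat \<Rightarrow> (nat \<times> bool) list \<Rightarrow> int option" where
  "kappa n w = (if \<exists>y \<in> chains n w. dchain n w y = psi n w
                then Some (int n + (LEAST i. \<exists>y \<in> filt n w i. dchain n w y = psi n w))
                else None)"

definition Zr :: "nat \<Rightarrow> (nat \<times> bool) list \<Rightarrow> nat \<Rightarrow> int \<Rightarrow> gen set set" where
  "Zr n w r p = {X \<in> filt n w p. dchain n w X \<in> filt n w (p - int r)}"

definition Br :: "nat \<Rightarrow> (nat \<times> bool) list \<Rightarrow> nat \<Rightarrow> int \<Rightarrow> gen set set" where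
  "Br n w r p = {chadd X (dchain n w Y) | X Y.
                   X \<in> Zr n w (r - 1) (p - 1) \<and> Y \<in> Zr n w (r - 1) (p + int r - 1)}"

definition page :: "nat \<Rightarrow> (nat \<times> bool) list \<Rightarrow> nat \<Rightarrow> int \<Rightarrow> gen set set set" where
  "page n w r p = Zr n w r p //
     {(X, Y). X \<in> Zr n w r p \<and> Y \<in> Zr n w r p \<and> chadd X Y \<in> Br n w r p}"

definition Zinf :: "nat \<Rightarrow> (nat \<times> bool) list \<Rightarrow> int \<Rightarrow> gen set set" where
  "Zinf n w p = {X \<in> filt n w p. dchain n w X = {}}"

definition Binf :: "nat \<Rightarrow> (nat \<times> bool) list \<Rightarrow> int \<Rightarrow> gen set set" where
  "Binf n w p = {chadd X Y | X Y. X \<in> Zinf n w (p - 1) \<and> Y \<in> filt n w p \<and>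
                    (\<exists>W \<in> chains n w. dchain n w W = Y)}"

definition page_inf :: "nat \<Rightarrow> (nat \<times> bool) list \<Rightarrow> int \<Rightarrow> gen set set set" where
  "page_inf n w p = Zinf n w p //
     {(X, Y). X \<in> Zinf n w p \<and> Y \<in> Zinf n w p \<and> chadd X Y \<in> Binf n w p}"

text \<open>E^r = E^infinity: the finite Z/2-vector spaces E^r_p and E^infinity_p are isomorphic
  (i.e. have the same cardinality) in every filtration degree p.\<close>
definition collapses_at :: "nat \<Rightarrow> (nat \<times> bool) list \<Rightarrow> nat \<Rightarrow> bool" where
  "collapses_at n w r \<longleftrightarrow> (\<forall>p. card (page n w r p) = card (page_inf n w p))"

definition ss_length :: "nat \<Rightarrow> (nat \<times> bool) list \<Rightarrow> nat" where
  "ss_length n w = (LEAST r. collapses_at n w r)"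

end

theory Submission
  imports Defs
begin

text \<open>In the braidlike resolution every circle is one strand closed up by the braid
  closure, so psi has k-grading -n, the bottom of the filtration; and every edge out of
  that resolution merges two such v_minus circles, so psi is a cycle.  In filtration
  degree -n there is nothing below, hence E-infinity there is cycles modulo boundaries,
  in which the boundary psi is zero.  On E^r, however, the only relations in degree -n
  are boundaries of chains in F_(r-n-1), and by the definition of kappa psi is not one
  of them while r < kappa.  So E^r and E-infinity differ in size in degree -n unless
  r >= kappa; the sequence does collapse at r = 2n+1, so its length is well defined.\<close>

lemma int_Least_le_of_bounded_below:
  fixes P :: "int \<Rightarrow> bool"
  assumes "P j" and bound: "\<And>i. P i \<Longrightarrow> b \<le> i"
  shows "(LEAST i. P i) \<le> j"
proof -
  define M where "M = {i \<in> {b..j}. P i}"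
  have "finite M" unfolding M_def by (rule finite_subset[of _ "{b..j}"]) auto
  moreover have "j \<in> M" using assms by (auto simp: M_def)
  ultimately have "Min M \<in> M" "\<And>i. i \<in> M \<Longrightarrow> Min M \<le> i"
    by (auto intro: Min_in)
  then have least: "P (Min M)" "\<And>i. P i \<Longrightarrow> Min M \<le> i"
    using \<open>j \<in> M\<close> bound by (fastforce simp: M_def)+
  then have "(LEAST i. P i) = Min M" by (rule Least_equality)
  then show ?thesis using least(2)[OF \<open>P j\<close>] by simp
qed

lemma card_quotient_less_of_finer:
  assumes fin: "finite K" and S: "equiv K S" and RS: "R \<subseteq> S"
    and refl: "\<And>x. x \<in> K \<Longrightarrow> (x, x) \<in> R"
    and ab: "(a, b) \<in> S" "(a, b) \<notin> R"
  shows "card (K//S) < card (K//R)"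
proof -
  let ?f = "\<lambda>X. S``X"
  have SK: "S \<subseteq> K \<times> K" using S by (rule equiv_type)
  have ab_K: "a \<in> K" "b \<in> K" using ab(1) SK by auto
  have trS: "(x, z) \<in> S" if "(x, y) \<in> S" "(y, z) \<in> S" for x y z
    using S that unfolding equiv_def by (blast elim: transE)
  have class_eq: "S``(R``{x}) = S``{x}" if "x \<in> K" for x
    using refl[OF that] RS trS by blast
  have onto: "?f ` (K//R) = K//S"
    unfolding quotient_def using class_eq by auto
  have finR: "finite (K//R)" using fin RS SK by (intro finite_quotient) auto
  have "R``{a} \<noteq> R``{b}"
    using refl[OF ab_K(2)] ab(2) by blast
  moreover have "?f (R``{a}) = ?f (R``{b})"
    using class_eq ab_K equiv_class_eq[OF S ab(1)] by simp
  ultimately have "\<not> inj_on ?f (K//R)"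
    using inj_onD[OF _ _ quotientI[OF ab_K(1)] quotientI[OF ab_K(2)]] by blast
  then have "card (?f ` (K//R)) \<noteq> card (K//R)"
    using eq_card_imp_inj_on[OF finR] by blast
  then have "card (?f ` (K//R)) < card (K//R)"
    using card_image_le[OF finR] by (rule le_neq_implies_less[rotated])
  then show ?thesis using onto by simp
qed

lemma card_quotient_Id_on: "card (A // Id_on A) = card A"
proof -
  have "A // Id_on A = (\<lambda>x. {x}) ` A" unfolding quotient_def by auto
  then show ?thesis by (simp add: card_image)
qed

lemma quotient_of_total_rel:
  assumes "a \<in> A" "\<And>x y. x \<in> A \<Longrightarrow> y \<in> A \<Longrightarrow> (x, y) \<in> R" "R \<subseteq> A \<times> A"
  shows "A // R = {A}"
  unfolding quotient_def using assms by auto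

lemma odd_card_symdiff:
  assumes "finite A" "finite B"
  shows "odd (card ((A - B) \<union> (B - A))) \<longleftrightarrow> odd (card A) \<noteq> odd (card B)"
proof -
  have "card ((A - B) \<union> (B - A)) = card (A - B) + card (B - A)"
    by (rule card_Un_disjoint) (use assms in auto)
  moreover have "card A = card (A \<inter> B) + card (A - B)" "card B = card (A \<inter> B) + card (B - A)"
    using card_Int_Diff[of A B] card_Int_Diff[of B A] assms by (simp_all add: Int_commute)
  ultimately have "card ((A - B) \<union> (B - A)) + 2 * card (A \<inter> B) = card A + card B" by simp
  then show ?thesis by (metis even_add even_mult_iff even_numeral)
qed

lemma finite_nodes: "finite (nodes n c)"
  by (rule finite_subset[of _ "{..<n} \<times> {..c}"]) (auto simp: nodes_def)

lemma equiv_comp_rel: "equiv (nodes n (length w)) (comp_rel n w s)"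
proof (rule equivI)
  let ?E = "res_edges n w s \<union> converse (res_edges n w s)"
  have "sym (?E\<^sup>*)" by (rule sym_rtrancl[OF sym_Un_converse])
  moreover have "trans (?E\<^sup>*)" by (rule trans_rtrancl)
  ultimately show "sym (comp_rel n w s)" "trans (comp_rel n w s)"
    unfolding comp_rel_def sym_def trans_def by blast+
qed (auto simp: comp_rel_def refl_on_def)

lemma finite_circles: "finite (circles n w s)"
  unfolding circles_def by (rule finite_quotient[OF finite_nodes]) (auto simp: comp_rel_def)

lemma circles_subset_nodes: "C \<in> circles n w s \<Longrightarrow> C \<subseteq> nodes n (length w)"
  unfolding circles_def using equiv_comp_rel by (metis Union_quotient Union_upper)

text \<open>A nontrivial circle meets level 0 and circles are disjoint, so picking a node
  of level 0 is injective.\<close>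
lemma card_nontrivial_circles_le: "card {C \<in> circles n w s. nontrivial C} \<le> n"
proof -
  let ?N = "{C \<in> circles n w s. nontrivial C}"
  define f where "f C = (SOME j. (j, 0) \<in> C)" for C :: "(nat \<times> nat) set"
  have f_mem: "(f C, 0) \<in> C" if "C \<in> ?N" for C
  proof -
    from that have "0 < card {j. (j, 0) \<in> C}"
      unfolding nontrivial_def by (auto intro: odd_pos)
    then have "{j. (j, 0) \<in> C} \<noteq> {}" by force
    then show ?thesis unfolding f_def by (auto intro: someI)
  qed
  have "inj_on f ?N"
  proof (rule inj_onI)
    fix C D assume C: "C \<in> ?N" and D: "D \<in> ?N" and "f C = f D"
    then have "(f C, 0) \<in> C \<inter> D" using f_mem[OF C] f_mem[OF D] by simp
    then have "C \<inter> D \<noteq> {}" by blast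
    with quotient_disj[OF equiv_comp_rel] C D show "C = D"
      unfolding circles_def by blast
  qed
  moreover have "f ` ?N \<subseteq> {..<n}"
    using f_mem circles_subset_nodes by (fastforce simp: nodes_def)
  ultimately show ?thesis using card_inj_on_le[of f ?N "{..<n}"] by simp
qed

lemma finite_gens: "finite (gens n w)"
proof -
  have "finite {s :: bool list. length s = length w}"
    using finite_lists_length_eq[of "UNIV :: bool set"] by simp
  then have "finite (\<Union>s \<in> {s. length s = length w}. {s} \<times> PiE (circles n w s) (\<lambda>_. UNIV :: bool set))"
    by (intro finite_UN_I finite_SigmaI finite_PiE finite_circles) auto
  moreover have "gens n w \<subseteq> (\<Union>s \<in> {s. length s = length w}. {s} \<times> PiE (circles n w s) (\<lambda>_. UNIV))"
    by (auto simp: gens_def)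
  ultimately show ?thesis by (rule finite_subset[rotated])
qed

lemma abs_kgr_le: "\<bar>kgr n w x\<bar> \<le> int n"
proof -
  let ?plus = "{C \<in> circles n w (fst x). nontrivial C \<and> snd x C}"
  let ?minus = "{C \<in> circles n w (fst x). nontrivial C \<and> \<not> snd x C}"
  have "card ?plus + card ?minus = card (?plus \<union> ?minus)"
    by (rule card_Un_disjoint[symmetric]) (auto intro: finite_subset[OF _ finite_circles])
  also have "?plus \<union> ?minus = {C \<in> circles n w (fst x). nontrivial C}" by auto
  finally have "card ?plus + card ?minus \<le> n" using card_nontrivial_circles_le by metis
  then show ?thesis unfolding kgr_def by linarith
qed

lemma filt_below:
  assumes "q < - int n" shows "filt n w q = {{}}"
proof -
  have "\<not> kgr n w x \<le> q" for x using abs_kgr_le[of n w x] assms by linarith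
  then show ?thesis by (auto simp: filt_def)
qed

lemma filt_above:
  assumes "int n \<le> q" shows "filt n w q = Pow (gens n w)"
proof -
  have "kgr n w x \<le> q" for x using abs_kgr_le[of n w x] assms by linarith
  then show ?thesis by (auto simp: filt_def)
qed

lemma empty_in_filt [simp]: "{} \<in> filt n w q"
  by (simp add: filt_def)

lemma chadd_empty [simp]: "chadd X {} = X" "chadd {} X = X"
  by (auto simp: chadd_def)

lemma chadd_self [simp]: "chadd X X = {}"
  by (auto simp: chadd_def)

lemma chadd_eq_empty_iff: "chadd X Y = {} \<longleftrightarrow> X = Y"
  by (auto simp: chadd_def)

lemma chadd_commute: "chadd X Y = chadd Y X"
  by (auto simp: chadd_def)

lemma chadd_chadd_cancel: "chadd (chadd X Y) (chadd Y Z) = chadd X Z"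
  by (auto simp: chadd_def)

lemma chadd_subset: "X \<subseteq> G \<Longrightarrow> Y \<subseteq> G \<Longrightarrow> chadd X Y \<subseteq> G"
  by (auto simp: chadd_def)

lemma chadd_in_filt: "X \<in> filt n w q \<Longrightarrow> Y \<in> filt n w q \<Longrightarrow> chadd X Y \<in> filt n w q"
  by (auto simp: filt_def chadd_def)

lemma dchain_empty [simp]: "dchain n w {} = {}"
  by (simp add: dchain_def)

lemma dchain_chadd:
  assumes "finite X" "finite Y"
  shows "dchain n w (chadd X Y) = chadd (dchain n w X) (dchain n w Y)"
proof -
  have "odd (card {x \<in> chadd X Y. coef n w x y}) \<longleftrightarrow>
        odd (card {x \<in> X. coef n w x y}) \<noteq> odd (card {x \<in> Y. coef n w x y})" for y
  proof -
    have "{x \<in> chadd X Y. coef n w x y} =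
       ({x \<in> X. coef n w x y} - {x \<in> Y. coef n w x y}) \<union> ({x \<in> Y. coef n w x y} - {x \<in> X. coef n w x y})"
      by (auto simp: chadd_def)
    then show ?thesis
      using odd_card_symdiff[of "{x \<in> X. coef n w x y}" "{x \<in> Y. coef n w x y}"] assms by simp
  qed
  then show ?thesis unfolding dchain_def chadd_def by auto
qed

lemma dchain_chadd_in_filt:
  assumes "X \<subseteq> gens n w" "Y \<subseteq> gens n w" "dchain n w X \<in> filt n w q" "dchain n w Y \<in> filt n w q"
  shows "dchain n w (chadd X Y) \<in> filt n w q"
  using assms finite_subset[OF _ finite_gens] dchain_chadd chadd_in_filt by metis

section \<open>The braidlike resolution and the cycle psi\<close>

lemma braidlike_res_nth: "k < length w \<Longrightarrow> braidlike_res w ! k \<longleftrightarrow> \<not> snd (w ! k)"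
  by (simp add: braidlike_res_def)

lemma length_braidlike_res [simp]: "length (braidlike_res w) = length w"
  by (simp add: braidlike_res_def)

lemma comp_rel_braidlike_res_fst_eq:
  assumes "(a, b) \<in> comp_rel n w (braidlike_res w)"
  shows "fst a = fst b"
proof -
  let ?E = "res_edges n w (braidlike_res w)"
  have edge: "fst x = fst y" if "(x, y) \<in> ?E" for x y
    using that by (auto simp: res_edges_def braidlike_res_nth)
  have "(a, b) \<in> (?E \<union> converse ?E)\<^sup>*" using assms by (simp add: comp_rel_def)
  then show ?thesis
    by (induction rule: rtrancl_induct) (auto dest: edge)
qed

definition strand_circle :: "nat \<Rightarrow> (nat \<times> bool) list \<Rightarrow> nat \<Rightarrow> (nat \<times> nat) set" where
  "strand_circle n w j = comp_rel n w (braidlike_res w) `` {(j, 0)}"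

lemma strand_circle_in_circles: "j < n \<Longrightarrow> strand_circle n w j \<in> circles n w (braidlike_res w)"
  unfolding strand_circle_def circles_def by (rule quotientI) (simp add: nodes_def)

lemma mem_strand_circle: "j < n \<Longrightarrow> (j, 0) \<in> strand_circle n w j"
  unfolding strand_circle_def by (rule equiv_class_self[OF equiv_comp_rel]) (simp add: nodes_def)

lemma fst_mem_strand_circle: "x \<in> strand_circle n w j \<Longrightarrow> fst x = j"
  unfolding strand_circle_def using comp_rel_braidlike_res_fst_eq by fastforce

lemma nontrivial_strand_circle:
  assumes "j < n" shows "nontrivial (strand_circle n w j)"
proof -
  have "{i. (i, 0) \<in> strand_circle n w j} = {j}"
    using mem_strand_circle[OF assms] fst_mem_strand_circle[of _ n w j] by fastforce
  then show ?thesis by (simp add: nontrivial_def)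
qed

lemma inj_on_strand_circle: "inj_on (strand_circle n w) {..<n}"
  by (rule inj_onI) (metis mem_strand_circle fst_mem_strand_circle fst_conv lessThan_iff)

definition psi_gen :: "nat \<Rightarrow> (nat \<times> bool) list \<Rightarrow> gen" where
  "psi_gen n w = (braidlike_res w, restrict (\<lambda>_. False) (circles n w (braidlike_res w)))"

lemma psi_eq: "psi n w = {psi_gen n w}"
  by (simp add: psi_def psi_gen_def)

lemma psi_gen_in_gens: "psi_gen n w \<in> gens n w"
  by (simp add: gens_def psi_gen_def)

lemma kgr_psi_gen: "kgr n w (psi_gen n w) = - int n"
proof -
  let ?N = "{C \<in> circles n w (braidlike_res w). nontrivial C}"
  have "strand_circle n w ` {..<n} \<subseteq> ?N"
    using strand_circle_in_circles nontrivial_strand_circle by auto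
  then have "card (strand_circle n w ` {..<n}) \<le> card ?N"
    by (rule card_mono[rotated]) (auto intro: finite_subset[OF _ finite_circles])
  then have "n \<le> card ?N" using card_image[OF inj_on_strand_circle] by simp
  moreover have "{C \<in> circles n w (braidlike_res w). nontrivial C \<and> snd (psi_gen n w) C} = {}"
    "{C \<in> circles n w (braidlike_res w). nontrivial C \<and> \<not> snd (psi_gen n w) C} = ?N"
    by (auto simp: psi_gen_def)
  ultimately have "kgr n w (psi_gen n w) \<le> - int n"
    unfolding kgr_def by (simp add: psi_gen_def)
  then show ?thesis using abs_kgr_le[of n w "psi_gen n w"] by linarith
qed

lemma psi_in_filt: "psi n w \<in> filt n w (- int n)"
  using psi_gen_in_gens kgr_psi_gen by (simp add: psi_eq filt_def)

lemma res_edges_vertical_off_crossing: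
  assumes "l < length w" "l \<noteq> k" "j < n"
  shows "((j, l), (j, Suc l)) \<in> res_edges n w ((braidlike_res w)[k := True])"
proof -
  have "(braidlike_res w)[k := True] ! l \<longleftrightarrow> \<not> snd (w ! l)"
    using assms by (simp add: braidlike_res_nth)
  then show ?thesis
    unfolding res_edges_def using assms by (cases "j = fst (w ! l) - 1 \<or> j = fst (w ! l)") blast+
qed

lemma vertical_path_below_crossing:
  assumes "k < length w" "j < n" "l \<le> k"
  shows "((j, 0), (j, l)) \<in> (res_edges n w ((braidlike_res w)[k := True]))\<^sup>*"
  using assms(3)
proof (induction l)
  case (Suc l)
  then have "((j, l), (j, Suc l)) \<in> res_edges n w ((braidlike_res w)[k := True])"
    using assms by (intro res_edges_vertical_off_crossing) auto
  with Suc show ?case by (meson Suc_leD rtrancl.rtrancl_into_rtrancl)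
qed simp

text \<open>The path runs up strand i-1 to level k, across the 1-resolved crossing, and
  back down strand i.\<close>
lemma comp_rel_merge_positive_crossing:
  assumes bw: "braid_word n w" and k: "k < length w" and pos: "snd (w ! k)"
  shows "((fst (w ! k) - 1, 0), (fst (w ! k), 0)) \<in> comp_rel n w ((braidlike_res w)[k := True])"
proof -
  let ?E = "res_edges n w ((braidlike_res w)[k := True])"
  let ?i = "fst (w ! k)"
  have i: "1 \<le> ?i" "?i < n" using bw k by (auto simp: braid_word_def)
  have "((?i - 1, 0), (?i - 1, k)) \<in> ?E\<^sup>*" "((?i, 0), (?i, k)) \<in> ?E\<^sup>*"
    using vertical_path_below_crossing[OF k] i by auto
  moreover have "((?i - 1, k), (?i, k)) \<in> ?E"
    unfolding res_edges_def using k pos by auto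
  ultimately have "((?i - 1, 0), (?i, 0)) \<in> (?E \<union> converse ?E)\<^sup>*"
    by (meson converse_rtrancl_into_rtrancl in_rtrancl_UnI rtrancl_converseI rtrancl_trans
        rtrancl_converse UnI1)
  moreover have "(?i - 1, 0) \<in> nodes n (length w)" "(?i, 0) \<in> nodes n (length w)"
    using i by (auto simp: nodes_def)
  ultimately show ?thesis by (simp add: comp_rel_def)
qed

lemma strand_circle_not_in_circles_after_merge:
  assumes bw: "braid_word n w" and k: "k < length w" and pos: "snd (w ! k)"
    and j: "j = fst (w ! k) - 1 \<or> j = fst (w ! k)"
  shows "strand_circle n w j \<notin> circles n w ((braidlike_res w)[k := True])"
proof
  let ?s = "(braidlike_res w)[k := True]"
  let ?i = "fst (w ! k)"
  have i: "1 \<le> ?i" "?i < n" using bw k by (auto simp: braid_word_def)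
  then have jn: "j < n" using j by auto
  assume "strand_circle n w j \<in> circles n w ?s"
  then obtain x where x: "strand_circle n w j = comp_rel n w ?s `` {x}"
    unfolding circles_def by (auto elim: quotientE)
  then have "(x, (j, 0)) \<in> comp_rel n w ?s" using mem_strand_circle[OF jn] by auto
  then have strand_class: "strand_circle n w j = comp_rel n w ?s `` {(j, 0)}"
    using x equiv_class_eq[OF equiv_comp_rel] by metis
  have merge: "((?i - 1, 0), (?i, 0)) \<in> comp_rel n w ?s"
    by (rule comp_rel_merge_positive_crossing[OF bw k pos])
  then have "((?i, 0), (?i - 1, 0)) \<in> comp_rel n w ?s"
    using equiv_comp_rel[of n w ?s] unfolding equiv_def by (blast elim: symE)
  with merge have "(?i - 1, 0) \<in> strand_circle n w j" "(?i, 0) \<in> strand_circle n w j"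
    using mem_strand_circle[of j n w, OF jn] j unfolding strand_class by auto
  then have "?i - 1 = ?i" by (metis fst_conv fst_mem_strand_circle)
  then show False using i by simp
qed

text \<open>Every edge leaving the braidlike resolution changes a positive crossing, hence
  merges two strand circles, both labelled v_minus; and m(v_minus v_minus) = 0.\<close>
lemma not_coef_psi_gen:
  assumes bw: "braid_word n w"
  shows "\<not> coef n w (psi_gen n w) y"
proof
  let ?s = "braidlike_res w"
  have fst_psi: "fst (psi_gen n w) = ?s" by (simp add: psi_gen_def)
  assume "coef n w (psi_gen n w) y"
  then obtain k where k: "k < length w" and sk: "\<not> ?s ! k" and y: "fst y = ?s[k := True]"
    and edge: "(\<exists>C \<in> circles n w ?s - circles n w (fst y). snd (psi_gen n w) C)
               \<or> card (circles n w ?s - circles n w (fst y)) = 1"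
    unfolding coef_def Let_def fst_psi by blast
  define A where "A = circles n w ?s - circles n w (fst y)"
  have pos: "snd (w ! k)" using sk k by (simp add: braidlike_res_nth)
  let ?i = "fst (w ! k)"
  have i: "1 \<le> ?i" "?i < n" using bw k by (auto simp: braid_word_def)
  have merged: "strand_circle n w j \<in> A" if "j = ?i - 1 \<or> j = ?i" for j
    unfolding A_def y using that i strand_circle_in_circles[of j n w]
      strand_circle_not_in_circles_after_merge[OF bw k pos that] by auto
  have distinct: "strand_circle n w (?i - 1) \<noteq> strand_circle n w ?i"
  proof
    assume "strand_circle n w (?i - 1) = strand_circle n w ?i"
    then have "?i - 1 = ?i" using inj_onD[OF inj_on_strand_circle] i by fastforce
    then show False using i by simp
  qed
  have "card {strand_circle n w (?i - 1), strand_circle n w ?i} \<le> card A"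
    using merged finite_circles[of n w ?s] by (intro card_mono) (auto simp: A_def)
  then have "card A \<noteq> 1" using distinct by simp
  moreover have "\<not> snd (psi_gen n w) C" if "C \<in> A" for C
    using that by (simp add: psi_gen_def A_def)
  ultimately show False using edge unfolding A_def by blast
qed

lemma dchain_psi:
  assumes "braid_word n w" shows "dchain n w (psi n w) = {}"
proof -
  have no_edge: "{x \<in> psi n w. coef n w x y} = {}" for y
    using not_coef_psi_gen[OF assms] by (simp add: psi_eq)
  show ?thesis by (simp add: dchain_def no_edge)
qed

lemma kappa_SomeD:
  assumes "kappa n w = Some k"
  shows "\<exists>W \<in> chains n w. dchain n w W = psi n w"
    and "\<And>j Y. Y \<in> filt n w j \<Longrightarrow> dchain n w Y = psi n w \<Longrightarrow> k \<le> int n + j"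
proof -
  let ?P = "\<lambda>i. \<exists>Y \<in> filt n w i. dchain n w Y = psi n w"
  show "\<exists>W \<in> chains n w. dchain n w W = psi n w"
    using assms by (auto simp: kappa_def split: if_splits)
  then have k: "k = int n + (LEAST i. ?P i)"
    using assms by (simp add: kappa_def)
  have bound: "- int n \<le> i" if "?P i" for i
  proof (rule ccontr)
    assume "\<not> - int n \<le> i"
    then have "filt n w i = {{}}" by (intro filt_below) simp
    with that show False by (simp add: psi_eq)
  qed
  fix j Y assume "Y \<in> filt n w j" "dchain n w Y = psi n w"
  then have "(LEAST i. ?P i) \<le> j" using bound by (intro int_Least_le_of_bounded_below) auto
  then show "k \<le> int n + j" using k by simp
qed

section \<open>The pages in the lowest filtration degree\<close>

definition page_rel :: "nat \<Rightarrow> (nat \<times> bool) list \<Rightarrow> nat \<Rightarrow> int \<Rightarrow> gen set rel" where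
  "page_rel n w r p = {(X, Y). X \<in> Zr n w r p \<and> Y \<in> Zr n w r p \<and> chadd X Y \<in> Br n w r p}"

definition page_inf_rel :: "nat \<Rightarrow> (nat \<times> bool) list \<Rightarrow> int \<Rightarrow> gen set rel" where
  "page_inf_rel n w p = {(X, Y). X \<in> Zinf n w p \<and> Y \<in> Zinf n w p \<and> chadd X Y \<in> Binf n w p}"

lemma page_eq_quotient: "page n w r p = Zr n w r p // page_rel n w r p"
  by (simp add: page_def page_rel_def)

lemma page_inf_eq_quotient: "page_inf n w p = Zinf n w p // page_inf_rel n w p"
  by (simp add: page_inf_def page_inf_rel_def)

lemma finite_Zinf: "finite (Zinf n w p)"
  by (rule finite_subset[of _ "Pow (gens n w)"]) (auto simp: Zinf_def filt_def finite_gens)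

lemma empty_in_Zinf [simp]: "{} \<in> Zinf n w p"
  by (simp add: Zinf_def)

lemma Zinf_below: "q < - int n \<Longrightarrow> Zinf n w q = {{}}"
  by (auto simp: Zinf_def filt_below)

lemma Binf_bottom:
  "Binf n w (- int n) = {Y \<in> filt n w (- int n). \<exists>W \<in> chains n w. dchain n w W = Y}"
  by (auto simp: Binf_def Zinf_below)

lemma equiv_page_inf_rel_bottom: "equiv (Zinf n w (- int n)) (page_inf_rel n w (- int n))"
  (is "equiv ?K ?S")
proof (rule equivI)
  have closed: "chadd A B \<in> Binf n w (- int n)"
    if A: "A \<in> Binf n w (- int n)" and B: "B \<in> Binf n w (- int n)" for A B
  proof -
    obtain V where V: "V \<subseteq> gens n w" "dchain n w V = A"
      using A by (auto simp: Binf_bottom chains_def)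
    obtain W where W: "W \<subseteq> gens n w" "dchain n w W = B"
      using B by (auto simp: Binf_bottom chains_def)
    have "finite V" "finite W" using V W finite_subset[OF _ finite_gens] by blast+
    then have "dchain n w (chadd V W) = chadd A B" using V W dchain_chadd by metis
    moreover have "chadd V W \<in> chains n w" using V W chadd_subset by (simp add: chains_def)
    moreover have "chadd A B \<in> filt n w (- int n)" using A B chadd_in_filt by (simp add: Binf_bottom)
    ultimately show ?thesis by (auto simp: Binf_bottom)
  qed
  have "{} \<in> Binf n w (- int n)"
    by (simp add: Binf_bottom chains_def) (metis Pow_bottom dchain_empty)
  then show "refl_on ?K ?S" by (simp add: refl_on_def page_inf_rel_def)
  show "?S \<subseteq> ?K \<times> ?K" "sym ?S"
    by (auto simp: page_inf_rel_def sym_def chadd_commute)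
  show "trans ?S"
  proof (rule transI)
    fix X Y Z assume "(X, Y) \<in> ?S" "(Y, Z) \<in> ?S"
    then show "(X, Z) \<in> ?S"
      using closed[of "chadd X Y" "chadd Y Z"] chadd_chadd_cancel[of X Y Z]
      by (simp add: page_inf_rel_def)
  qed
qed

lemma psi_in_Zinf: "braid_word n w \<Longrightarrow> psi n w \<in> Zinf n w (- int n)"
  using psi_in_filt dchain_psi by (simp add: Zinf_def)

lemma card_page_inf_bottom_less:
  assumes bw: "braid_word n w" and boundary: "\<exists>W \<in> chains n w. dchain n w W = psi n w"
    and finer: "R \<subseteq> page_inf_rel n w (- int n)"
    and refl: "\<And>X. X \<in> Zinf n w (- int n) \<Longrightarrow> (X, X) \<in> R"
    and psi_not_0: "(psi n w, {}) \<notin> R"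
  shows "card (page_inf n w (- int n)) < card (Zinf n w (- int n) // R)"
proof -
  have "(psi n w, {}) \<in> page_inf_rel n w (- int n)"
    using psi_in_Zinf[OF bw] psi_in_filt boundary by (simp add: page_inf_rel_def Binf_bottom)
  then show ?thesis
    unfolding page_inf_eq_quotient
    using card_quotient_less_of_finer[OF finite_Zinf equiv_page_inf_rel_bottom finer refl _ psi_not_0]
    by blast
qed

lemma card_page_inf_bottom_less_page_0:
  assumes bw: "braid_word n w" and boundary: "\<exists>W \<in> chains n w. dchain n w W = psi n w"
  shows "card (page_inf n w (- int n)) < card (page n w 0 (- int n))"
proof -
  let ?K = "Zinf n w (- int n)" and ?Z = "Zr n w 0 (- int n)"
  have "Br n w 0 (- int n) = {{}}"
    by (auto simp: Br_def Zr_def filt_below intro!: exI[of _ "{}"])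
  then have "page_rel n w 0 (- int n) = Id_on ?Z"
    by (auto simp: page_rel_def chadd_eq_empty_iff)
  then have page_0: "card (page n w 0 (- int n)) = card ?Z"
    by (simp add: page_eq_quotient card_quotient_Id_on)
  have "Id_on ?K \<subseteq> page_inf_rel n w (- int n)"
    using equiv_page_inf_rel_bottom[of n w] by (auto simp: equiv_def refl_on_def)
  then have "card (page_inf n w (- int n)) < card (?K // Id_on ?K)"
    using psi_eq by (intro card_page_inf_bottom_less[OF bw boundary]) auto
  also have "\<dots> \<le> card ?Z"
    unfolding card_quotient_Id_on
  proof (rule card_mono)
    show "finite ?Z"
      by (rule finite_subset[of _ "Pow (gens n w)"]) (auto simp: Zr_def filt_def finite_gens)
  qed (auto simp: Zinf_def Zr_def)
  finally show ?thesis using page_0 by simp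
qed

lemma Br_bottom_subset:
  assumes "0 < r" and "Z \<in> Br n w r (- int n)"
  shows "Z \<in> Binf n w (- int n) \<and> (\<exists>Y \<in> filt n w (int r - int n - 1). dchain n w Y = Z)"
proof -
  obtain X Y where Z: "Z = chadd X (dchain n w Y)" and X: "X \<in> Zr n w (r - 1) (- int n - 1)"
    and Y: "Y \<in> Zr n w (r - 1) (- int n + int r - 1)"
    using assms(2) unfolding Br_def by blast
  have "X = {}" using X by (simp add: Zr_def filt_below)
  moreover have "Y \<in> filt n w (int r - int n - 1)" "dchain n w Y \<in> filt n w (- int n)"
    using Y assms(1) by (simp_all add: Zr_def of_nat_diff)
  moreover have "Y \<in> chains n w" using \<open>Y \<in> filt n w (int r - int n - 1)\<close>
    by (simp add: chains_def filt_def)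
  ultimately show ?thesis using Z by (auto simp: Binf_bottom)
qed

lemma card_page_inf_bottom_less_page:
  assumes bw: "braid_word n w" and boundary: "\<exists>W \<in> chains n w. dchain n w W = psi n w"
    and "0 < r" and late: "\<And>Y. Y \<in> filt n w (int r - int n - 1) \<Longrightarrow> dchain n w Y \<noteq> psi n w"
  shows "card (page_inf n w (- int n)) < card (page n w r (- int n))"
proof -
  have "Zr n w r (- int n) = Zinf n w (- int n)"
    using \<open>0 < r\<close> by (auto simp: Zr_def Zinf_def filt_below)
  then have page: "page n w r (- int n) = Zinf n w (- int n) // page_rel n w r (- int n)"
    by (simp add: page_eq_quotient)
  have "{} \<in> Br n w r (- int n)"
    unfolding Br_def by (auto simp: Zr_def intro!: exI[of _ "{}"])
  moreover have "psi n w \<notin> Br n w r (- int n)"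
    using Br_bottom_subset[OF \<open>0 < r\<close>] late by blast
  moreover have "page_rel n w r (- int n) \<subseteq> page_inf_rel n w (- int n)"
    using Br_bottom_subset[OF \<open>0 < r\<close>] \<open>Zr n w r (- int n) = Zinf n w (- int n)\<close>
    by (auto simp: page_rel_def page_inf_rel_def)
  ultimately show ?thesis unfolding page
    using \<open>Zr n w r (- int n) = Zinf n w (- int n)\<close>
    by (intro card_page_inf_bottom_less[OF bw boundary]) (auto simp: page_rel_def)
qed

theorem not_collapses_at_below_kappa:
  assumes bw: "braid_word n w" and "kappa n w = Some k" and "int r < k"
  shows "\<not> collapses_at n w r"
proof -
  note boundary = kappa_SomeD(1)[OF assms(2)]
  have "card (page_inf n w (- int n)) < card (page n w r (- int n))"
  proof (cases "r = 0")
    case True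
    then show ?thesis using card_page_inf_bottom_less_page_0[OF bw boundary] by simp
  next
    case False
    have "dchain n w Y \<noteq> psi n w" if "Y \<in> filt n w (int r - int n - 1)" for Y
      using kappa_SomeD(2)[OF assms(2) that] \<open>int r < k\<close> by force
    then show ?thesis using False by (intro card_page_inf_bottom_less_page[OF bw boundary]) auto
  qed
  then show ?thesis unfolding collapses_at_def by (metis less_irrefl)
qed

section \<open>Collapse once r exceeds the width of the filtration\<close>

lemma card_page_eq_below:
  assumes "p < - int n"
  shows "card (page n w r p) = card (page_inf n w p)"
proof -
  have "Zr n w r p = {{}}" "Zinf n w p = {{}}"
    using assms by (auto simp: Zr_def Zinf_def filt_below)
  then show ?thesis by (simp add: page_def page_inf_def singleton_quotient)
qed

lemma page_eq_page_inf:
  assumes low: "p + int n < int r" and high: "int n < p + int r"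
  shows "page n w r p = page_inf n w p"
proof -
  have r: "int (r - 1) = int r - 1" using low high by simp
  have "Zr n w r p = Zinf n w p"
    using low by (auto simp: Zr_def Zinf_def filt_below)
  moreover have "Zr n w (r - 1) (p - 1) = Zinf n w (p - 1)"
    using low r by (auto simp: Zr_def Zinf_def filt_below)
  moreover have "Zr n w (r - 1) (p + int r - 1) = {Y \<in> chains n w. dchain n w Y \<in> filt n w p}"
    using high r by (auto simp: Zr_def chains_def filt_above)
  ultimately have "Br n w r p = Binf n w p"
    unfolding Br_def Binf_def by (auto simp: chains_def)
  with \<open>Zr n w r p = Zinf n w p\<close> show ?thesis
    by (simp add: page_def page_inf_def)
qed

lemma card_page_above:
  assumes "int n < p" and "0 < r"
  shows "card (page n w r p) = 1"
proof -
  have "(X, Y) \<in> page_rel n w r p" if X: "X \<in> Zr n w r p" and Y: "Y \<in> Zr n w r p" for X Y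
  proof -
    have gens: "X \<subseteq> gens n w" "Y \<subseteq> gens n w" using X Y by (auto simp: Zr_def filt_def)
    have "dchain n w (chadd X Y) \<in> filt n w (p - int r)"
      using X Y gens by (intro dchain_chadd_in_filt) (auto simp: Zr_def)
    then have "chadd X Y \<in> Zr n w (r - 1) (p - 1)"
      using assms chadd_subset[OF gens] by (simp add: Zr_def filt_above of_nat_diff)
    moreover have "{} \<in> Zr n w (r - 1) (p + int r - 1)"
      by (simp add: Zr_def)
    ultimately have "chadd (chadd X Y) (dchain n w {}) \<in> Br n w r p"
      unfolding Br_def by blast
    then show ?thesis using X Y by (simp add: page_rel_def)
  qed
  moreover have "{} \<in> Zr n w r p" by (simp add: Zr_def)
  ultimately have "page n w r p = {Zr n w r p}"
    unfolding page_eq_quotient by (intro quotient_of_total_rel) (auto simp: page_rel_def)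
  then show ?thesis by simp
qed

lemma card_page_inf_above:
  assumes "int n < p"
  shows "card (page_inf n w p) = 1"
proof -
  have "(X, Y) \<in> page_inf_rel n w p" if X: "X \<in> Zinf n w p" and Y: "Y \<in> Zinf n w p" for X Y
  proof -
    have gens: "X \<subseteq> gens n w" "Y \<subseteq> gens n w" using X Y by (auto simp: Zinf_def filt_def)
    then have "finite X" "finite Y" using finite_subset[OF _ finite_gens] by blast+
    then have "chadd X Y \<in> Zinf n w (p - 1)"
      using X Y assms chadd_subset[OF gens] dchain_chadd by (simp add: Zinf_def filt_above)
    moreover have "{} \<in> filt n w p" "\<exists>W \<in> chains n w. dchain n w W = {}"
      by (auto simp: chains_def intro: bexI[of _ "{}"])
    ultimately have "chadd (chadd X Y) {} \<in> Binf n w p"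
      unfolding Binf_def by blast
    then show ?thesis using X Y by (simp add: page_inf_rel_def)
  qed
  then have "page_inf n w p = {Zinf n w p}"
    unfolding page_inf_eq_quotient by (intro quotient_of_total_rel[where a = "{}"]) (auto simp: page_inf_rel_def)
  then show ?thesis by simp
qed

lemma collapses_at_beyond_width: "collapses_at n w (2 * n + 1)"
  unfolding collapses_at_def
proof
  fix p
  consider "p < - int n" | "- int n \<le> p" "p \<le> int n" | "int n < p" by linarith
  then show "card (page n w (2 * n + 1) p) = card (page_inf n w p)"
    by cases (simp_all add: card_page_eq_below page_eq_page_inf card_page_above card_page_inf_above)
qed

theorem mainTheorem11:
  fixes n :: nat and w :: "(nat \<times> bool) list" and k :: int
  assumes "braid_word n w"
    and "kappa n w = Some k"
  shows "k \<le> int (ss_length n w)"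
proof -
  have "collapses_at n w (ss_length n w)"
    unfolding ss_length_def by (rule LeastI[of _ "2 * n + 1"]) (rule collapses_at_beyond_width)
  then show ?thesis using not_collapses_at_below_kappa[OF assms] by force
qed

end
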